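(* Let $(a_d)_{d\in\mathbb N}$ be a real sequence and $(b_d)_{d\in\mathbb N}$ a positive sequence with $b_d\to\infty$. Let $q:(0,1)\to\mathbb R$ be non-increasing and let $G$ be a distribution function such that $q(\varepsilon)=G^{-1}(1-\varepsilon^2)$ for all $\varepsilon\in C(q)$. Then $$\ln n^{X_d}(\varepsilon)=a_d+q(\varepsilon)b_d+o(b_d),\quad d\to\infty,\quad\text{for all }\varepsilon\in C(q)$$ holds if and only if $G^{X_d}_{a_d,b_d}$ converges weakly to $G$, i.e. $\lim_{d\to\infty}G^{X_d}_{a_d,b_d}(x)=G(x)$ for all $x\in C(G)$, where $$G^{X_d}_{a_d,b_d}(x)=\sum_{k=1}^\infty\bar\lambda^{X_d}_k\,\mathbf 1\bigl(\bar\lambda^{X_d}_k\ge e^{-a_d-xb_d}\bigr),\quad x\in\mathbb R.$$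
   Context: For each $d\in\mathbb N$, $X_d$ is a random element of a separable Hilbert space $H_d$ with $\mathbb E X_d=0$ and $\mathbb E\|X_d\|_{H_d}^2<\infty$. For a centered Hilbert-space random element $Z$ with finite second moment, $\lambda^Z_1\ge\lambda^Z_2\ge\dots\ge 0$ denote the eigenvalues of its covariance operator listed with multiplicity (padded with zeros if there are finitely many), $\Lambda^Z=\sum_k\lambda^Z_k=\mathbb E\|Z\|^2$, and $\bar\lambda^Z_k=\lambda^Z_k/\Lambda^Z$. It is assumed that $\lambda^{X_d}_1>0$ for all $d$. The average case approximation complexity is $n^{X_d}(\varepsilon)=\min\{n\in\mathbb N: e^{X_d}(n)\le \varepsilon\, e^{X_d}(0)\}$ for $\varepsilon\in(0,1)$, where $e^{X_d}(0)=(\mathbb E\|X_d\|^2)^{1/2}$ and $e^{X_d}(n)$ is the infimum of $(\mathbb E\|X_d-\sum_{m=1}^n l_m(X_d)\psi_m\|^2)^{1/2}$ over all $\psi_m\in H_d$, $l_m\in H_d^*$; equivalently $n^{X_d}(\varepsilon)=\min\{n\in\mathbb N:\ \sum_{k>n}\bar\lambda^{X_d}_k\le\varepsilon^2\}$. A distribution function is a non-decreasing right-continuous $F:\mathbb R\to[0,1]$ with limits $0$ at $-\infty$ and $1$ at $+\infty$. For a function $f$, $C(f)$ denotes its set of continuity points and $f^{-1}(y)=\inf\{x\in\mathbb R: f(x)\ge y\}$ its generalized inverse. $\mathbf 1(A)$ is the indicator of $A$. *)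

theory Defs
  imports "HOL-Analysis.Analysis"
begin

text \<open>Eigenvalue sequence of the covariance operator of a centered random element
  with finite second moment: non-negative, non-increasing, summable (listed with
  multiplicity, padded with zeros). Index k = 0 corresponds to lambda_1.\<close>
definition eigen_seq :: "(nat \<Rightarrow> real) \<Rightarrow> bool" where
  "eigen_seq l \<longleftrightarrow> (\<forall>k. 0 \<le> l k) \<and> (\<forall>k. l (Suc k) \<le> l k) \<and> summable l"

definition total_var :: "(nat \<Rightarrow> real) \<Rightarrow> real" where
  "total_var l = (\<Sum>k. l k)"

definition norm_eig :: "(nat \<Rightarrow> real) \<Rightarrow> nat \<Rightarrow> real" where
  "norm_eig l k = l k / total_var l"

text \<open>Average case approximation complexity:
  min { n : sum_{k>n} bar-lambda_k <= eps^2 } (1-based), i.e. tail from 0-based index n.\<close>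
definition avg_complexity :: "(nat \<Rightarrow> real) \<Rightarrow> real \<Rightarrow> nat" where
  "avg_complexity l \<epsilon> = (LEAST n::nat. 1 \<le> n \<and> (\<Sum>j. norm_eig l (j + n)) \<le> \<epsilon>\<^sup>2)"

definition G_fun :: "(nat \<Rightarrow> real) \<Rightarrow> real \<Rightarrow> real \<Rightarrow> real \<Rightarrow> real" where
  "G_fun l a b x = (\<Sum>k. norm_eig l k *
      (if norm_eig l k \<ge> exp (- a - x * b) then 1 else 0))"

definition distribution_function :: "(real \<Rightarrow> real) \<Rightarrow> bool" where
  "distribution_function F \<longleftrightarrow> mono F \<and> (\<forall>x. 0 \<le> F x \<and> F x \<le> 1) \<and>
     (\<forall>x. continuous (at_right x) F) \<and> (F \<longlongrightarrow> 0) at_bot \<and> (F \<longlongrightarrow> 1) at_top"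

definition gen_inv :: "(real \<Rightarrow> real) \<Rightarrow> real \<Rightarrow> real" where
  "gen_inv f y = Inf {x. f x \<ge> y}"

end

theory Submission
  imports Defs "HOL-Probability.Weak_Convergence"
begin

(* Let N(eps) be the complexity and M(t) the mass of the normalized eigenvalues that are at
   least t, so that G_{a,b}(x) = M(exp(-a-xb)). As the eigenvalues are non-increasing,
   M(t) >= 1 - eps^2 forces the first N(eps) of them to be >= t, whence N(eps) t <= 1;
   and since the first N(eps') eigenvalues carry mass >= 1 - eps'^2, we always have
   1 - eps'^2 <= M(t) + N(eps') t. With t = exp(-a-xb) these read
     G_{a,b}(x) >= 1 - eps^2            ==>  (ln N(eps) - a)/b <= x,
     G_{a,b}(x) < 1 - eps^2, eps' < eps  ==>  (ln N(eps') - a)/b > x + ln(eps^2 - eps'^2)/b,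
   and the error term ln(eps^2 - eps'^2)/b vanishes as b -> infinity. Both directions of the
   equivalence follow from these two bounds, the Galois connection
   G^{-1}(y) <= x <-> y <= G(x) of the right-continuous G, and the density of the continuity
   points of the monotone functions q and G. *)

definition mass_above :: "(nat \<Rightarrow> real) \<Rightarrow> real \<Rightarrow> real" where
  "mass_above l t = (\<Sum>k. norm_eig l k * (if t \<le> norm_eig l k then 1 else 0))"

lemma G_fun_eq_mass_above: "G_fun l a b x = mass_above l (exp (- a - x * b))"
  unfolding G_fun_def mass_above_def by simp

definition normalized_log_complexity :: "(nat \<Rightarrow> real) \<Rightarrow> real \<Rightarrow> real \<Rightarrow> real \<Rightarrow> real" where
  "normalized_log_complexity l a b \<epsilon> = (ln (real (avg_complexity l \<epsilon>)) - a) / b"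

locale nontrivial_eigen_seq =
  fixes l :: "nat \<Rightarrow> real"
  assumes eigen_seq: "eigen_seq l" and first_pos: "0 < l 0"
begin

lemma eigen_nonneg: "0 \<le> l k" and summable_eigen: "summable l" and decseq_eigen: "decseq l"
  using eigen_seq unfolding eigen_seq_def by (auto intro: decseq_SucI)

lemma total_var_pos: "0 < total_var l"
proof -
  have "l 0 \<le> (\<Sum>k. l k)"
    using sum_le_suminf[OF summable_eigen, of "{0}"] eigen_nonneg by simp
  then show ?thesis
    using first_pos unfolding total_var_def by simp
qed

lemma norm_eig_nonneg: "0 \<le> norm_eig l k"
  using eigen_nonneg total_var_pos by (simp add: norm_eig_def)

lemma norm_eig_antimono: "k \<le> j \<Longrightarrow> norm_eig l j \<le> norm_eig l k"
  using decseq_eigen total_var_pos by (simp add: norm_eig_def decseq_def divide_right_mono)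

lemma summable_norm_eig: "summable (norm_eig l)"
  unfolding norm_eig_def[abs_def] by (rule summable_divide[OF summable_eigen])

lemma suminf_norm_eig: "(\<Sum>k. norm_eig l k) = 1"
  using total_var_pos unfolding norm_eig_def total_var_def by (simp add: suminf_divide[OF summable_eigen])

lemma avg_complexity_eq_Least:
  "avg_complexity l \<epsilon> = (LEAST n. 1 \<le> n \<and> 1 - \<epsilon>\<^sup>2 \<le> (\<Sum>k<n. norm_eig l k))"
proof -
  have tail: "(\<Sum>j. norm_eig l (j + n)) = 1 - (\<Sum>k<n. norm_eig l k)" for n
    using suminf_split_initial_segment[OF summable_norm_eig, of n] suminf_norm_eig by simp
  have "(\<Sum>j. norm_eig l (j + n)) \<le> \<epsilon>\<^sup>2 \<longleftrightarrow> 1 - \<epsilon>\<^sup>2 \<le> (\<Sum>k<n. norm_eig l k)" for n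
    using tail[of n] by auto
  then show ?thesis
    unfolding avg_complexity_def by presburger
qed

lemma
  assumes "0 < \<epsilon>"
  shows avg_complexity_ge_1: "1 \<le> avg_complexity l \<epsilon>"
    and sum_norm_eig_avg_complexity: "1 - \<epsilon>\<^sup>2 \<le> (\<Sum>k<avg_complexity l \<epsilon>. norm_eig l k)"
proof -
  have "(\<lambda>n. \<Sum>k<n. norm_eig l k) \<longlonglongrightarrow> 1"
    using summable_LIMSEQ[OF summable_norm_eig] suminf_norm_eig by simp
  then have "\<forall>\<^sub>F n in sequentially. 1 - \<epsilon>\<^sup>2 < (\<Sum>k<n. norm_eig l k)"
    by (rule order_tendstoD) (use assms in simp)
  then obtain n0 where "\<forall>n\<ge>n0. 1 - \<epsilon>\<^sup>2 < (\<Sum>k<n. norm_eig l k)"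
    by (auto simp: eventually_sequentially)
  then have "\<exists>n. 1 \<le> n \<and> 1 - \<epsilon>\<^sup>2 \<le> (\<Sum>k<n. norm_eig l k)"
    by (intro exI[of _ "max 1 n0"]) (auto intro: less_imp_le)
  then show "1 \<le> avg_complexity l \<epsilon>" "1 - \<epsilon>\<^sup>2 \<le> (\<Sum>k<avg_complexity l \<epsilon>. norm_eig l k)"
    unfolding avg_complexity_eq_Least by (metis (mono_tags, lifting) LeastI_ex)+
qed

lemma sum_norm_eig_before_avg_complexity:
  assumes "0 < \<epsilon>" "\<epsilon> < 1" "avg_complexity l \<epsilon> = Suc m"
  shows "(\<Sum>k<m. norm_eig l k) < 1 - \<epsilon>\<^sup>2"
proof (cases "m = 0")
  case True
  then show ?thesis
    using assms by (simp add: power_less_one_iff)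
next
  case False
  then show ?thesis
    using not_less_Least[where P = "\<lambda>n. 1 \<le> n \<and> 1 - \<epsilon>\<^sup>2 \<le> (\<Sum>k<n. norm_eig l k)" and k = m]
    using assms(3) unfolding avg_complexity_eq_Least by fastforce
qed

lemma summable_mass_above: "summable (\<lambda>k. norm_eig l k * (if t \<le> norm_eig l k then 1 else 0))"
  by (rule summable_comparison_test[OF _ summable_norm_eig]) (auto simp: norm_eig_nonneg)

lemma mass_above_nonneg: "0 \<le> mass_above l t"
  unfolding mass_above_def by (rule suminf_nonneg[OF summable_mass_above]) (simp add: norm_eig_nonneg)

lemma mass_above_le_1: "mass_above l t \<le> 1"
proof -
  have "mass_above l t \<le> (\<Sum>k. norm_eig l k)"
    unfolding mass_above_def
    by (rule suminf_le[OF _ summable_mass_above summable_norm_eig]) (simp add: norm_eig_nonneg)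
  then show ?thesis
    using suminf_norm_eig by simp
qed

lemma avg_complexity_mult_le_1:
  assumes "0 < \<epsilon>" "\<epsilon> < 1" "1 - \<epsilon>\<^sup>2 \<le> mass_above l t"
  shows "real (avg_complexity l \<epsilon>) * t \<le> 1"
proof -
  obtain m where m: "avg_complexity l \<epsilon> = Suc m"
    using avg_complexity_ge_1[OF assms(1)] by (cases "avg_complexity l \<epsilon>") auto
  have "t \<le> norm_eig l m"
  proof (rule ccontr)
    assume "\<not> t \<le> norm_eig l m"
    then have small: "\<not> t \<le> norm_eig l k" if "\<not> k < m" for k
      using norm_eig_antimono[of m k] that by linarith
    have "mass_above l t = (\<Sum>k<m. norm_eig l k * (if t \<le> norm_eig l k then 1 else 0))"
      unfolding mass_above_def by (rule suminf_finite) (simp_all add: small)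
    also have "\<dots> \<le> (\<Sum>k<m. norm_eig l k)"
      by (rule sum_mono) (simp add: norm_eig_nonneg)
    also have "\<dots> < 1 - \<epsilon>\<^sup>2"
      by (rule sum_norm_eig_before_avg_complexity[OF assms(1,2) m])
    finally show False
      using assms(3) by simp
  qed
  then have "t \<le> norm_eig l k" if "k < Suc m" for k
    using norm_eig_antimono[of k m] that by linarith
  then have "(\<Sum>k<Suc m. t) \<le> (\<Sum>k<Suc m. norm_eig l k)"
    by (intro sum_mono) simp
  also have "\<dots> \<le> (\<Sum>k. norm_eig l k)"
    by (rule sum_le_suminf[OF summable_norm_eig]) (simp_all add: norm_eig_nonneg)
  finally show ?thesis
    by (simp add: m suminf_norm_eig mult.commute)
qed

lemma avg_complexity_mult_ge:
  assumes "0 < \<epsilon>" "0 \<le> t"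
  shows "1 - \<epsilon>\<^sup>2 \<le> mass_above l t + real (avg_complexity l \<epsilon>) * t"
proof -
  define N where "N = avg_complexity l \<epsilon>"
  have "1 - \<epsilon>\<^sup>2 - real N * t \<le> (\<Sum>k<N. norm_eig l k - t)"
    using sum_norm_eig_avg_complexity[OF assms(1)] by (simp add: sum_subtractf N_def)
  also have "\<dots> \<le> (\<Sum>k<N. norm_eig l k * (if t \<le> norm_eig l k then 1 else 0))"
    by (rule sum_mono) (use assms(2) in \<open>simp add: norm_eig_nonneg\<close>)
  also have "\<dots> \<le> mass_above l t"
    unfolding mass_above_def
    by (rule sum_le_suminf[OF summable_mass_above]) (simp_all add: norm_eig_nonneg)
  finally show ?thesis
    by (simp add: N_def)
qed

lemma normalized_log_complexity_le:
  assumes "0 < b" "0 < \<epsilon>" "\<epsilon> < 1" "1 - \<epsilon>\<^sup>2 \<le> G_fun l a b x"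
  shows "normalized_log_complexity l a b \<epsilon> \<le> x"
proof -
  let ?N = "real (avg_complexity l \<epsilon>)"
  have "?N * exp (- a - x * b) \<le> 1"
    using avg_complexity_mult_le_1[OF assms(2,3)] assms(4) by (simp add: G_fun_eq_mass_above)
  moreover have "1 \<le> ?N"
    using avg_complexity_ge_1[OF assms(2)] by simp
  ultimately have "ln (?N * exp (- a - x * b)) \<le> ln 1"
    by (subst ln_le_cancel_iff) simp_all
  then have "ln ?N - a - x * b \<le> 0"
    using \<open>1 \<le> ?N\<close> by (simp add: ln_mult)
  then show ?thesis
    using assms(1) unfolding normalized_log_complexity_def by (simp add: divide_le_eq)
qed

lemma normalized_log_complexity_gt:
  assumes "0 < b" "0 < \<epsilon>'" "\<epsilon>' < \<epsilon>" "G_fun l a b x < 1 - \<epsilon>\<^sup>2"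
  shows "x + ln (\<epsilon>\<^sup>2 - \<epsilon>'\<^sup>2) / b < normalized_log_complexity l a b \<epsilon>'"
proof -
  let ?N = "real (avg_complexity l \<epsilon>')"
  have "\<epsilon>\<^sup>2 - \<epsilon>'\<^sup>2 < ?N * exp (- a - x * b)"
    using avg_complexity_mult_ge[OF assms(2), of "exp (- a - x * b)"] assms(4)
    by (simp add: G_fun_eq_mass_above)
  moreover have "0 < \<epsilon>\<^sup>2 - \<epsilon>'\<^sup>2"
    using assms(2,3) by (simp add: power_strict_mono)
  moreover have "1 \<le> ?N"
    using avg_complexity_ge_1[OF assms(2)] by simp
  ultimately have "ln (\<epsilon>\<^sup>2 - \<epsilon>'\<^sup>2) < ln (?N * exp (- a - x * b))"
    by (subst ln_less_cancel_iff) simp_all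
  then have "ln (\<epsilon>\<^sup>2 - \<epsilon>'\<^sup>2) < ln ?N - a - x * b"
    using \<open>1 \<le> ?N\<close> by (simp add: ln_mult)
  then have "(x * b + ln (\<epsilon>\<^sup>2 - \<epsilon>'\<^sup>2)) / b < (ln ?N - a) / b"
    using assms(1) by (intro divide_strict_right_mono) simp_all
  then show ?thesis
    using assms(1) unfolding normalized_log_complexity_def by (simp add: add_divide_distrib)
qed

end

lemma gen_inv_le_iff:
  assumes "distribution_function G" "0 < y" "y < 1"
  shows "gen_inv G y \<le> x \<longleftrightarrow> y \<le> G x"
proof -
  interpret right_continuous_mono G 0 1
    using assms(1) unfolding distribution_function_def by unfold_locales auto
  show ?thesis
    unfolding gen_inv_def by (rule pseudoinverse[OF assms(2,3), symmetric])
qed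

lemma isCont_uminus_iff:
  fixes f :: "real \<Rightarrow> real"
  shows "isCont (\<lambda>x. - f x) x \<longleftrightarrow> isCont f x"
proof
  assume "isCont (\<lambda>x. - f x) x"
  from isCont_minus[OF this] show "isCont f x"
    by simp
qed (rule isCont_minus)

lemma antimono_on_ctble_discont_open:
  fixes f :: "real \<Rightarrow> real"
  assumes "open A" "antimono_on A f"
  shows "countable {x\<in>A. \<not> isCont f x}"
proof -
  have "mono_on A (\<lambda>x. - f x)"
    using assms(2) unfolding monotone_on_def by simp
  from mono_on_ctble_discont_open[OF assms(1) this]
  show ?thesis
    by (simp only: isCont_uminus_iff)
qed

lemma exists_isCont_between:
  fixes f :: "real \<Rightarrow> real"
  assumes "countable {x\<in>A. \<not> isCont f x}" "{u<..<v} \<subseteq> A" "u < v"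
  shows "\<exists>x\<in>{u<..<v}. isCont f x"
proof -
  obtain x where "x \<in> {u<..<v}" "x \<notin> {x\<in>A. \<not> isCont f x}"
    using open_minus_countable[OF assms(1), of "{u<..<v}"] assms(3) by auto
  then show ?thesis
    using assms(2) by blast
qed

lemma eventually_at_left_interval:
  fixes x :: real
  assumes "eventually P (at x)"
  obtains u where "u < x" "\<And>y. u < y \<Longrightarrow> y < x \<Longrightarrow> P y"
  using assms that by (auto simp: eventually_at_split eventually_at_left_field)

lemma eventually_at_right_interval:
  fixes x :: real
  assumes "eventually P (at x)"
  obtains v where "x < v" "\<And>y. x < y \<Longrightarrow> y < v \<Longrightarrow> P y"
  using assms that by (auto simp: eventually_at_split eventually_at_right_field)

locale complexity_asymptotics =
  fixes lam :: "nat \<Rightarrow> nat \<Rightarrow> real"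
    and a b :: "nat \<Rightarrow> real"
    and q G :: "real \<Rightarrow> real"
  assumes eigen: "\<And>d. eigen_seq (lam d)"
    and first_pos: "\<And>d. lam d 0 > 0"
    and b_pos: "\<And>d. b d > 0"
    and b_at_top: "filterlim b at_top sequentially"
    and q_antimono: "antimono_on {0<..<1} q"
    and G_distribution: "distribution_function G"
    and q_eq_gen_inv: "\<And>\<epsilon>. \<epsilon> \<in> {0<..<1} \<Longrightarrow> isCont q \<epsilon> \<Longrightarrow> q \<epsilon> = gen_inv G (1 - \<epsilon>\<^sup>2)"
begin

abbreviation G_seq :: "nat \<Rightarrow> real \<Rightarrow> real" where
  "G_seq d \<equiv> G_fun (lam d) (a d) (b d)"

abbreviation log_complexity_seq :: "nat \<Rightarrow> real \<Rightarrow> real" where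
  "log_complexity_seq d \<equiv> normalized_log_complexity (lam d) (a d) (b d)"

lemma nontrivial_eigen_seq: "nontrivial_eigen_seq (lam d)"
  using eigen first_pos by unfold_locales

lemma log_complexity_seq_le:
  "0 < \<epsilon> \<Longrightarrow> \<epsilon> < 1 \<Longrightarrow> 1 - \<epsilon>\<^sup>2 \<le> G_seq d x \<Longrightarrow> log_complexity_seq d \<epsilon> \<le> x"
  by (rule nontrivial_eigen_seq.normalized_log_complexity_le[OF nontrivial_eigen_seq b_pos])

lemma log_complexity_seq_gt:
  "0 < \<epsilon>' \<Longrightarrow> \<epsilon>' < \<epsilon> \<Longrightarrow> G_seq d x < 1 - \<epsilon>\<^sup>2 \<Longrightarrow>
    x + ln (\<epsilon>\<^sup>2 - \<epsilon>'\<^sup>2) / b d < log_complexity_seq d \<epsilon>'"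
  by (rule nontrivial_eigen_seq.normalized_log_complexity_gt[OF nontrivial_eigen_seq b_pos])

lemma G_seq_nonneg: "0 \<le> G_seq d x" and G_seq_le_1: "G_seq d x \<le> 1"
  using nontrivial_eigen_seq.mass_above_nonneg[OF nontrivial_eigen_seq]
    nontrivial_eigen_seq.mass_above_le_1[OF nontrivial_eigen_seq]
  by (simp_all add: G_fun_eq_mass_above)

lemma G_mono: "mono G" and G_nonneg: "0 \<le> G x" and G_le_1: "G x \<le> 1"
  using G_distribution unfolding distribution_function_def by blast+

lemma tendsto_const_div_b: "((\<lambda>d. c / b d) \<longlongrightarrow> 0) sequentially"
  by (rule tendsto_divide_0[OF tendsto_const filterlim_at_top_imp_at_infinity[OF b_at_top]])

lemma q_le_iff: "\<epsilon> \<in> {0<..<1} \<Longrightarrow> isCont q \<epsilon> \<Longrightarrow> q \<epsilon> \<le> x \<longleftrightarrow> 1 - \<epsilon>\<^sup>2 \<le> G x"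
  using q_eq_gen_inv gen_inv_le_iff[OF G_distribution, of "1 - \<epsilon>\<^sup>2"] by (simp add: power_less_one_iff)

lemma isCont_q_between:
  assumes "0 \<le> u" "u < v" "v \<le> 1"
  shows "\<exists>\<epsilon>\<in>{u<..<v}. isCont q \<epsilon>"
proof (rule exists_isCont_between)
  show "countable {\<epsilon>\<in>{0<..<1}. \<not> isCont q \<epsilon>}"
    by (rule antimono_on_ctble_discont_open[OF open_greaterThanLessThan q_antimono])
  show "{u<..<v} \<subseteq> {0<..<1}"
    using assms(1,3) by auto
qed (fact assms(2))

lemma isCont_q_square_between:
  assumes "0 \<le> u" "u < v" "v \<le> 1"
  obtains \<epsilon> where "\<epsilon> \<in> {0<..<1}" "isCont q \<epsilon>" "u < \<epsilon>\<^sup>2" "\<epsilon>\<^sup>2 < v"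
proof -
  obtain \<epsilon> where \<epsilon>: "sqrt u < \<epsilon>" "\<epsilon> < sqrt v" "isCont q \<epsilon>"
    using isCont_q_between[of "sqrt u" "sqrt v"] assms by auto
  have "0 < \<epsilon>"
    using \<epsilon>(1) assms(1) by (meson le_less_trans real_sqrt_ge_zero)
  moreover have "\<epsilon> < 1"
    using less_le_trans[OF \<epsilon>(2), of 1] assms(3) by simp
  ultimately have "\<epsilon> \<in> {0<..<1}"
    by simp
  moreover have "u < \<epsilon>\<^sup>2"
    using power_strict_mono[OF \<epsilon>(1) real_sqrt_ge_zero, of 2] assms(1) by simp
  moreover have "\<epsilon>\<^sup>2 < v"
    using power_strict_mono[OF \<epsilon>(2), of 2] \<open>0 < \<epsilon>\<close> assms(1,2) by simp
  ultimately show ?thesis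
    by (rule that[OF _ \<epsilon>(3)])
qed

lemma isCont_G_between:
  assumes "u < v"
  shows "\<exists>x\<in>{u<..<v}. isCont G x"
proof (rule exists_isCont_between)
  show "countable {x\<in>UNIV. \<not> isCont G x}"
    using mono_ctble_discont[OF G_mono] by simp
qed (use assms in auto)

lemma G_seq_eventually_gt:
  assumes lim: "\<And>\<epsilon>. \<epsilon> \<in> {0<..<1} \<Longrightarrow> isCont q \<epsilon> \<Longrightarrow> (\<lambda>d. log_complexity_seq d \<epsilon>) \<longlonglongrightarrow> q \<epsilon>"
    and x: "isCont G x" and c: "c < G x"
  shows "\<forall>\<^sub>F d in sequentially. c < G_seq d x"
proof (cases "c < 0")
  case True
  then show ?thesis
    by (intro always_eventually allI less_le_trans[OF True G_seq_nonneg])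
next
  case False
  obtain \<epsilon>' where \<epsilon>': "\<epsilon>' \<in> {0<..<1}" "isCont q \<epsilon>'" "1 - G x < \<epsilon>'\<^sup>2" "\<epsilon>'\<^sup>2 < 1 - c"
    by (rule isCont_q_square_between[of "1 - G x" "1 - c"]) (use G_le_1[of x] c False in auto)
  obtain \<epsilon> where \<epsilon>: "\<epsilon> \<in> {0<..<1}" "\<epsilon>'\<^sup>2 < \<epsilon>\<^sup>2" "\<epsilon>\<^sup>2 < 1 - c"
    by (rule isCont_q_square_between[of "\<epsilon>'\<^sup>2" "1 - c"]) (use \<epsilon>'(4) False in auto)
  have "\<epsilon>' < \<epsilon>"
    using \<epsilon>(1,2) by (auto intro: power_less_imp_less_base)
  have "\<forall>\<^sub>F y in at x. 1 - \<epsilon>'\<^sup>2 < G y"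
    using order_tendstoD(1)[OF x[unfolded isCont_def], of "1 - \<epsilon>'\<^sup>2"] \<epsilon>'(3) by simp
  then obtain u where "u < x" and u: "\<And>y. u < y \<Longrightarrow> y < x \<Longrightarrow> 1 - \<epsilon>'\<^sup>2 < G y"
    by (rule eventually_at_left_interval) auto
  then have "1 - \<epsilon>'\<^sup>2 \<le> G ((u + x) / 2)"
    by (simp add: less_imp_le)
  then have "q \<epsilon>' \<le> (u + x) / 2"
    using q_le_iff[OF \<epsilon>'(1,2)] by blast
  then have "q \<epsilon>' < x"
    using \<open>u < x\<close> by (simp add: field_simps)
  have "(\<lambda>d. log_complexity_seq d \<epsilon>' - ln (\<epsilon>\<^sup>2 - \<epsilon>'\<^sup>2) / b d) \<longlonglongrightarrow> q \<epsilon>' - 0"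
    by (intro tendsto_diff lim \<epsilon>' tendsto_const_div_b)
  then have "\<forall>\<^sub>F d in sequentially. log_complexity_seq d \<epsilon>' - ln (\<epsilon>\<^sup>2 - \<epsilon>'\<^sup>2) / b d < x"
    using \<open>q \<epsilon>' < x\<close> by (simp add: order_tendstoD(2))
  then show ?thesis
  proof eventually_elim
    case (elim d)
    then have "\<not> G_seq d x < 1 - \<epsilon>\<^sup>2"
      using log_complexity_seq_gt[of \<epsilon>' \<epsilon> d x] \<epsilon>'(1) \<open>\<epsilon>' < \<epsilon>\<close> by auto
    then show ?case
      using \<epsilon>(3) by linarith
  qed
qed

lemma G_seq_eventually_less:
  assumes lim: "\<And>\<epsilon>. \<epsilon> \<in> {0<..<1} \<Longrightarrow> isCont q \<epsilon> \<Longrightarrow> (\<lambda>d. log_complexity_seq d \<epsilon>) \<longlonglongrightarrow> q \<epsilon>"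
    and x: "isCont G x" and c: "G x < c"
  shows "\<forall>\<^sub>F d in sequentially. G_seq d x < c"
proof (cases "1 < c")
  case True
  then show ?thesis
    by (intro always_eventually allI le_less_trans[OF G_seq_le_1 True])
next
  case False
  obtain \<epsilon> where \<epsilon>: "\<epsilon> \<in> {0<..<1}" "isCont q \<epsilon>" "1 - c < \<epsilon>\<^sup>2" "\<epsilon>\<^sup>2 < 1 - G x"
    by (rule isCont_q_square_between[of "1 - c" "1 - G x"]) (use G_nonneg[of x] c False in auto)
  have "\<forall>\<^sub>F y in at x. G y < 1 - \<epsilon>\<^sup>2"
    using order_tendstoD(2)[OF x[unfolded isCont_def], of "1 - \<epsilon>\<^sup>2"] \<epsilon>(4) by simp
  then obtain v where "x < v" and v: "\<And>y. x < y \<Longrightarrow> y < v \<Longrightarrow> G y < 1 - \<epsilon>\<^sup>2"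
    by (rule eventually_at_right_interval) auto
  then have "\<not> 1 - \<epsilon>\<^sup>2 \<le> G ((x + v) / 2)"
    by (simp add: not_le)
  then have "(x + v) / 2 < q \<epsilon>"
    using q_le_iff[OF \<epsilon>(1,2)] by (meson not_le)
  then have "x < q \<epsilon>"
    using \<open>x < v\<close> by (simp add: field_simps)
  then have "\<forall>\<^sub>F d in sequentially. x < log_complexity_seq d \<epsilon>"
    by (rule order_tendstoD(1)[OF lim[OF \<epsilon>(1,2)]])
  then show ?thesis
  proof eventually_elim
    case (elim d)
    then have "\<not> 1 - \<epsilon>\<^sup>2 \<le> G_seq d x"
      using log_complexity_seq_le[of \<epsilon> d x] \<epsilon>(1) by auto
    then show ?case
      using \<epsilon>(3) by linarith
  qed
qed

lemma log_complexity_seq_eventually_less: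
  assumes conv: "weak_conv G_seq G" and \<epsilon>: "\<epsilon> \<in> {0<..<1}" "isCont q \<epsilon>" and c: "q \<epsilon> < c"
  shows "\<forall>\<^sub>F d in sequentially. log_complexity_seq d \<epsilon> < c"
proof -
  have "\<forall>\<^sub>F y in at \<epsilon>. q y < c"
    using order_tendstoD(2)[OF \<epsilon>(2)[unfolded isCont_def] c] .
  then obtain u where "u < \<epsilon>" and u: "\<And>y. u < y \<Longrightarrow> y < \<epsilon> \<Longrightarrow> q y < c"
    by (rule eventually_at_left_interval) auto
  obtain \<epsilon>' where \<epsilon>': "\<epsilon>' \<in> {max 0 u<..<\<epsilon>}" "isCont q \<epsilon>'"
    using isCont_q_between[of "max 0 u" \<epsilon>] \<open>u < \<epsilon>\<close> \<epsilon>(1) by auto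
  then have "q \<epsilon>' < c" "\<epsilon>' \<in> {0<..<1}"
    using u \<epsilon>(1) by auto
  then obtain x where x: "x \<in> {q \<epsilon>'<..<c}" "isCont G x"
    using isCont_G_between[of "q \<epsilon>'" c] by auto
  have "1 - \<epsilon>'\<^sup>2 \<le> G x"
    using q_le_iff[OF \<open>\<epsilon>' \<in> {0<..<1}\<close> \<epsilon>'(2), of x] x(1) by simp
  moreover have "\<epsilon>'\<^sup>2 < \<epsilon>\<^sup>2"
    using \<epsilon>'(1) by (intro power_strict_mono) auto
  ultimately have "1 - \<epsilon>\<^sup>2 < G x"
    by linarith
  moreover have "(\<lambda>d. G_seq d x) \<longlonglongrightarrow> G x"
    using conv x(2) by (simp add: weak_conv_def)
  ultimately have "\<forall>\<^sub>F d in sequentially. 1 - \<epsilon>\<^sup>2 < G_seq d x"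
    by (rule order_tendstoD(1)[rotated])
  then show ?thesis
  proof eventually_elim
    case (elim d)
    then show ?case
      using log_complexity_seq_le[of \<epsilon> d x] \<epsilon>(1) x(1) by fastforce
  qed
qed

lemma log_complexity_seq_eventually_gt:
  assumes conv: "weak_conv G_seq G" and \<epsilon>: "\<epsilon> \<in> {0<..<1}" "isCont q \<epsilon>" and c: "c < q \<epsilon>"
  shows "\<forall>\<^sub>F d in sequentially. c < log_complexity_seq d \<epsilon>"
proof -
  have "\<forall>\<^sub>F y in at \<epsilon>. c < q y"
    using order_tendstoD(1)[OF \<epsilon>(2)[unfolded isCont_def] c] .
  then obtain v where "\<epsilon> < v" and v: "\<And>y. \<epsilon> < y \<Longrightarrow> y < v \<Longrightarrow> c < q y"
    by (rule eventually_at_right_interval) auto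
  obtain \<epsilon>' where \<epsilon>': "\<epsilon>' \<in> {\<epsilon><..<min 1 v}" "isCont q \<epsilon>'"
    using isCont_q_between[of \<epsilon> "min 1 v"] \<open>\<epsilon> < v\<close> \<epsilon>(1) by auto
  then have "c < q \<epsilon>'" "\<epsilon>' \<in> {0<..<1}"
    using v \<epsilon>(1) by auto
  then obtain x where x: "x \<in> {c<..<q \<epsilon>'}" "isCont G x"
    using isCont_G_between[of c "q \<epsilon>'"] by auto
  have "G x < 1 - \<epsilon>'\<^sup>2"
    using q_le_iff[OF \<open>\<epsilon>' \<in> {0<..<1}\<close> \<epsilon>'(2), of x] x(1) by simp
  moreover have "(\<lambda>d. G_seq d x) \<longlonglongrightarrow> G x"
    using conv x(2) by (simp add: weak_conv_def)
  ultimately have "\<forall>\<^sub>F d in sequentially. G_seq d x < 1 - \<epsilon>'\<^sup>2"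
    by (rule order_tendstoD(2)[rotated])
  moreover have "\<forall>\<^sub>F d in sequentially. c < x + ln (\<epsilon>'\<^sup>2 - \<epsilon>\<^sup>2) / b d"
  proof (rule order_tendstoD(1))
    show "(\<lambda>d. x + ln (\<epsilon>'\<^sup>2 - \<epsilon>\<^sup>2) / b d) \<longlonglongrightarrow> x + 0"
      by (intro tendsto_add tendsto_const tendsto_const_div_b)
  qed (use x(1) in simp)
  ultimately show ?thesis
  proof eventually_elim
    case (elim d)
    then show ?case
      using log_complexity_seq_gt[of \<epsilon> \<epsilon>' d x] \<epsilon>(1) \<epsilon>'(1) by auto
  qed
qed

lemma log_complexity_tendsto_iff_weak_conv:
  "(\<forall>\<epsilon>\<in>{0<..<1}. isCont q \<epsilon> \<longrightarrow> (\<lambda>d. log_complexity_seq d \<epsilon>) \<longlonglongrightarrow> q \<epsilon>) \<longleftrightarrow> weak_conv G_seq G"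
proof
  assume "\<forall>\<epsilon>\<in>{0<..<1}. isCont q \<epsilon> \<longrightarrow> (\<lambda>d. log_complexity_seq d \<epsilon>) \<longlonglongrightarrow> q \<epsilon>"
  then have lim: "\<And>\<epsilon>. \<epsilon> \<in> {0<..<1} \<Longrightarrow> isCont q \<epsilon> \<Longrightarrow> (\<lambda>d. log_complexity_seq d \<epsilon>) \<longlonglongrightarrow> q \<epsilon>"
    by simp
  show "weak_conv G_seq G"
    unfolding weak_conv_def
    by (intro allI impI order_tendstoI G_seq_eventually_gt[OF lim] G_seq_eventually_less[OF lim])
next
  assume conv: "weak_conv G_seq G"
  show "\<forall>\<epsilon>\<in>{0<..<1}. isCont q \<epsilon> \<longrightarrow> (\<lambda>d. log_complexity_seq d \<epsilon>) \<longlonglongrightarrow> q \<epsilon>"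
    by (intro ballI impI order_tendstoI log_complexity_seq_eventually_less[OF conv]
        log_complexity_seq_eventually_gt[OF conv])
qed

end

theorem theorem1:
  fixes lam :: "nat \<Rightarrow> nat \<Rightarrow> real"
    and a b :: "nat \<Rightarrow> real"
    and q G :: "real \<Rightarrow> real"
  assumes eig: "\<And>d. eigen_seq (lam d)"
    and pos1: "\<And>d. lam d 0 > 0"
    and bpos: "\<And>d. b d > 0"
    and binf: "filterlim b at_top sequentially"
    and qmono: "antimono_on {0<..<1} q"
    and Gdf: "distribution_function G"
    and qG: "\<And>\<epsilon>. \<epsilon> \<in> {0<..<1} \<Longrightarrow> isCont q \<epsilon> \<Longrightarrow> q \<epsilon> = gen_inv G (1 - \<epsilon>\<^sup>2)"
  shows "(\<forall>\<epsilon>\<in>{0<..<1}. isCont q \<epsilon> \<longrightarrow>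
            ((\<lambda>d. (ln (real (avg_complexity (lam d) \<epsilon>)) - a d - q \<epsilon> * b d) / b d)
               \<longlongrightarrow> 0) sequentially)
       \<longleftrightarrow> (\<forall>x. isCont G x \<longrightarrow> ((\<lambda>d. G_fun (lam d) (a d) (b d) x) \<longlongrightarrow> G x) sequentially)"
proof -
  interpret complexity_asymptotics lam a b q G
    by (rule complexity_asymptotics.intro) (fact assms)+
  have "(ln (real (avg_complexity (lam d) \<epsilon>)) - a d - q \<epsilon> * b d) / b d = log_complexity_seq d \<epsilon> - q \<epsilon>"
    for d \<epsilon>
    using bpos[of d] by (simp add: normalized_log_complexity_def diff_divide_distrib)
  then have error_tendsto_iff: "((\<lambda>d. (ln (real (avg_complexity (lam d) \<epsilon>)) - a d - q \<epsilon> * b d) / b d)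
      \<longlongrightarrow> 0) sequentially \<longleftrightarrow> (\<lambda>d. log_complexity_seq d \<epsilon>) \<longlonglongrightarrow> q \<epsilon>" for \<epsilon>
    by (simp only: LIM_zero_iff)
  show ?thesis
    using log_complexity_tendsto_iff_weak_conv unfolding weak_conv_def error_tendsto_iff .
qed

end
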